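(* Let $\mathrm L$ be a spline-admissible operator with pseudoinverse $\mathrm L^\dagger$ and let $K_{\mathrm L}=\{\bm k\in\mathbb Z^d:\widehat L[\bm k]\ne0\}$. (i) If $\sum_{\bm k\in K_{\mathrm L}}|\widehat L[\bm k]|^{-1}<\infty$, then $\mathrm L$ is sampling-admissible. (ii) If $\sum_{\bm k\in K_{\mathrm L}}|\widehat L[\bm k]|^{-2}=\infty$, then $\mathrm L$ is not sampling-admissible. In particular, if $\mathrm L$ has spectral growth $\gamma>d$ then it is sampling-admissible, and if it has spectral growth $\gamma\le d/2$ then it is not sampling-admissible.
   Context: $\mathbb T^d=\mathbb R^d/2\pi\mathbb Z^d$; $\mathcal S'(\mathbb T^d)$ the generalized periodic functions, with Fourier expansion $f=\sum\widehat f[\bm k]e_{\bm k}$, $e_{\bm k}(\bm x)=e^{\mathrm i\langle\bm x,\bm k\rangle}$. Linear shift-invariant continuous operators on $\mathcal S'(\mathbb T^d)$ act by $\mathrm Lf=\sum\widehat L[\bm k]\widehat f[\bm k]e_{\bm k}$ for slowly growing $\widehat L$; $\mathrm L^*$ has sequence $\overline{\widehat L}$. $\mathrm L$ is spline-admissible if its null space is finite-dimensional and it admits a pseudoinverse $\mathrm L^\dagger$ ($\mathrm L\mathrm L^\dagger\mathrm L=\mathrm L$, $\mathrm L^\dagger\mathrm L\mathrm L^\dagger=\mathrm L^\dagger$, $\mathrm L\mathrm L^\dagger$, $\mathrm L^\dagger\mathrm L$ self-adjoint); $\mathrm L^\dagger$ has Fourier sequence $1/\widehat L[\bm k]$ where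 $\widehat L[\bm k]\ne0$ and $0$ otherwise. $Ш$ is the Dirac comb. The measurement space is $\mathcal C_{\mathrm L}(\mathbb T^d)=\{g\in\mathcal S':(\mathrm L^\dagger)^*g$ continuous$\}$, and $\mathrm L$ is sampling-admissible if $Ш(\cdot-\bm x_0)\in\mathcal C_{\mathrm L}(\mathbb T^d)$ for all $\bm x_0\in\mathbb T^d$. $\mathrm L$ has spectral growth $\gamma\ge0$ if there exist $0<A\le B<\infty$, $k_0\ge0$ with $A\|\bm k\|^\gamma\le|\widehat L[\bm k]|\le B\|\bm k\|^\gamma$ for all $\|\bm k\|\ge k_0$. *)

theory Defs
  imports "HOL-Analysis.Analysis"
begin

text \<open>Frequencies k in Z^d are vectors of type int^'d; d = CARD('d).
  An LSI operator L on S'(T^d) is represented by its Fourier multiplier sequence Lhat.\<close>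

definition kvec :: "int ^ 'd \<Rightarrow> real ^ 'd" where
  "kvec k = (\<chi> i. real_of_int (k $ i))"

definition slowly_growing :: "(int ^ 'd \<Rightarrow> complex) \<Rightarrow> bool" where
  "slowly_growing a \<longleftrightarrow> (\<exists>C (N::nat). \<forall>k. norm (a k) \<le> C * (1 + norm (kvec k)) ^ N)"

definition pinv_seq :: "(int ^ 'd \<Rightarrow> complex) \<Rightarrow> int ^ 'd \<Rightarrow> complex" where
  "pinv_seq Lhat k = (if Lhat k = 0 then 0 else 1 / Lhat k)"

text \<open>L is continuous LSI on S' (slowly growing multiplier), has finite-dimensional
  null space (spanned by the e_k with Lhat k = 0), and admits a pseudoinverse, i.e. the
  operator with sequence pinv_seq is a continuous LSI operator on S'.\<close>
definition spline_admissible :: "(int ^ 'd \<Rightarrow> complex) \<Rightarrow> bool" where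
  "spline_admissible Lhat \<longleftrightarrow>
     slowly_growing Lhat \<and> finite {k. Lhat k = 0} \<and> slowly_growing (pinv_seq Lhat)"

definition periodic_fun :: "(real ^ 'd \<Rightarrow> complex) \<Rightarrow> bool" where
  "periodic_fun f \<longleftrightarrow> (\<forall>x n. f (x + (2 * pi) *\<^sub>R kvec n) = f x)"

definition fourier_coeff :: "(real ^ 'd \<Rightarrow> complex) \<Rightarrow> int ^ 'd \<Rightarrow> complex" where
  "fourier_coeff f k =
     integral (cbox 0 (\<chi> i. 2 * pi)) (\<lambda>x. f x * exp (- \<i> * complex_of_real (x \<bullet> kvec k)))
       / complex_of_real ((2 * pi) ^ CARD('d))"

text \<open>The generalized periodic function with Fourier coefficients c is a continuous function.\<close>
definition continuous_gen :: "(int ^ 'd \<Rightarrow> complex) \<Rightarrow> bool" where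
  "continuous_gen c \<longleftrightarrow>
     (\<exists>f. continuous_on UNIV f \<and> periodic_fun f \<and> (\<forall>k. fourier_coeff f k = c k))"

text \<open>Fourier coefficients of the shifted Dirac comb Sha(. - x0) (up to a normalizing constant).\<close>
definition shifted_comb :: "real ^ 'd \<Rightarrow> int ^ 'd \<Rightarrow> complex" where
  "shifted_comb x0 k = exp (- \<i> * complex_of_real (x0 \<bullet> kvec k))"

text \<open>(L^dagger)^* Sha(. - x0) is continuous for every x0.\<close>
definition sampling_admissible :: "(int ^ 'd \<Rightarrow> complex) \<Rightarrow> bool" where
  "sampling_admissible Lhat \<longleftrightarrow>
     (\<forall>x0. continuous_gen (\<lambda>k. cnj (pinv_seq Lhat k) * shifted_comb x0 k))"

definition spectral_growth :: "(int ^ 'd \<Rightarrow> complex) \<Rightarrow> real \<Rightarrow> bool" where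
  "spectral_growth Lhat \<gamma> \<longleftrightarrow> \<gamma> \<ge> 0 \<and>
     (\<exists>A B k0. 0 < A \<and> A \<le> B \<and> k0 \<ge> 0 \<and>
        (\<forall>k. norm (kvec k) \<ge> k0 \<longrightarrow>
           A * norm (kvec k) powr \<gamma> \<le> norm (Lhat k) \<and> norm (Lhat k) \<le> B * norm (kvec k) powr \<gamma>))"

end

theory Submission
  imports Defs
begin

(*
  If the coefficients c_k = conj (1 / Lhat k) e^(-i<x0,k>) are absolutely summable, their Fourier
  series converges uniformly to a continuous periodic function, and orthogonality of the characters
  on the cell [0, 2 pi]^d shows that its Fourier coefficients are exactly c_k. Conversely, Bessel's
  inequality forces the coefficients of a continuous function to be square summable, while
  |c_k| = 1 / |Lhat k|. Under spectral growth gamma both criteria reduce to the lattice sums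
  sum_k |k|^(-s): these converge for s > d (compare with a product of one-dimensional p-series)
  and diverge for s = d (each dyadic shell of the positive cone contributes a fixed amount).
*)

section \<open>Characters of the torus\<close>

lemma integral_lborel_prod_Basis:
  fixes f :: "'a::euclidean_space \<Rightarrow> real \<Rightarrow> complex"
  assumes "\<And>b. b \<in> Basis \<Longrightarrow> integrable lborel (f b)"
  shows "(\<integral>x. (\<Prod>b\<in>Basis. f b (x \<bullet> b)) \<partial>(lborel::'a measure))
           = (\<Prod>b\<in>Basis. \<integral>t. f b t \<partial>lborel)"
proof -
  interpret product_sigma_finite "\<lambda>_::'a. lborel::real measure" by standard
  have meas: "\<And>b. b \<in> Basis \<Longrightarrow> f b \<in> borel_measurable borel"
    using borel_measurable_integrable[OF assms] by (simp add: measurable_lborel1)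
  have "(\<integral>x. (\<Prod>b\<in>Basis. f b (x \<bullet> b)) \<partial>(lborel::'a measure))
      = (\<integral>y. (\<Prod>b\<in>Basis. f b ((\<Sum>b\<in>Basis. y b *\<^sub>R b) \<bullet> b)) \<partial>(\<Pi>\<^sub>M b\<in>Basis. lborel))"
    by (subst lborel_eq, rule integral_distr) (simp, intro borel_measurable_prod, use meas in measurable)
  also have "\<dots> = (\<integral>y. (\<Prod>b\<in>Basis. f b (y b)) \<partial>(\<Pi>\<^sub>M b\<in>Basis. lborel))"
    by (intro Bochner_Integration.integral_cong prod.cong)
      (simp_all add: inner_sum_left inner_Basis if_distrib cong: if_cong)
  also have "\<dots> = (\<Prod>b\<in>Basis. \<integral>t. f b t \<partial>lborel)"
    by (rule product_integral_prod) (auto intro: assms)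
  finally show ?thesis .
qed

lemma has_integral_exp_int_interval:
  fixes m :: int
  shows "((\<lambda>t. exp (\<i> * of_real t * of_int m)) has_integral (if m = 0 then of_real (2*pi) else 0)) {0..2*pi}"
proof (cases "m = 0")
  case True
  then show ?thesis
    using has_integral_const_real[of "1::complex" 0 "2*pi"] by (simp add: scaleR_conv_of_real)
next
  case False
  let ?F = "\<lambda>t::real. exp (\<i> * of_real t * of_int m) / (\<i> * of_int m)"
  have "(?F has_vector_derivative exp (\<i> * of_real t * of_int m)) (at t within {0..2*pi})" for t
  proof -
    have "((\<lambda>z. exp (\<i> * z * of_int m) / (\<i> * of_int m)) has_field_derivative exp (\<i> * of_real t * of_int m))
        (at (of_real t))"
      using False by (intro derivative_eq_intros refl) (auto simp: field_simps)
    then show ?thesis by (rule has_vector_derivative_real_field)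
  qed
  then have "((\<lambda>t. exp (\<i> * of_real t * of_int m)) has_integral (?F (2*pi) - ?F 0)) {0..2*pi}"
    by (intro fundamental_theorem_of_calculus) auto
  moreover have "exp (\<i> * of_real (2*pi) * of_int m) = 1"
    using exp_integer_2pi[of "of_int m"] by (simp add: mult_ac)
  ultimately show ?thesis
    using False by simp
qed

lemma kvec_diff: "kvec (k - j) = kvec k - kvec j"
  by (simp add: kvec_def vec_eq_iff)

lemma kvec_eq_0_iff [simp]: "kvec k = 0 \<longleftrightarrow> k = 0"
  by (simp add: kvec_def vec_eq_iff)

lemma kvec_0 [simp]: "kvec 0 = 0"
  by simp

lemma kvec_inner_axis: "kvec k \<bullet> axis i 1 = real_of_int (k $ i)"
  by (simp add: kvec_def inner_axis)

definition torus_char :: "int^'d \<Rightarrow> real^'d \<Rightarrow> complex" where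
  "torus_char k x = exp (\<i> * of_real (x \<bullet> kvec k))"

definition torus_cell :: "(real^'d) set" where
  "torus_cell = cbox 0 (\<chi> i. 2*pi)"

lemma norm_torus_char [simp]: "norm (torus_char k x) = 1"
  by (simp add: torus_char_def)

lemma continuous_on_torus_char [continuous_intros]: "continuous_on A (torus_char k)"
  unfolding torus_char_def by (intro continuous_intros)

lemma torus_char_mult_cnj: "torus_char k x * cnj (torus_char j x) = torus_char (k - j) x"
proof -
  have "torus_char k x * cnj (torus_char j x) = exp (\<i> * of_real (x \<bullet> kvec k) - \<i> * of_real (x \<bullet> kvec j))"
    by (simp add: torus_char_def exp_cnj exp_diff exp_minus field_simps)
  then show ?thesis
    by (simp add: torus_char_def kvec_diff inner_diff_right right_diff_distrib)
qed

lemma torus_char_periodic: "torus_char k (x + (2 * pi) *\<^sub>R kvec n) = torus_char k x"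
proof -
  obtain m :: int where m: "kvec n \<bullet> kvec k = of_int m"
    by (simp add: kvec_def inner_vec_def flip: of_int_mult of_int_sum)
  have "torus_char k (x + (2 * pi) *\<^sub>R kvec n) = torus_char k x * exp (2 * of_real pi * \<i> * of_int m)"
    by (simp add: torus_char_def inner_add_left m exp_add[symmetric] algebra_simps)
  also have "exp (2 * of_real pi * \<i> * of_int m) = 1"
    using exp_integer_2pi[of "of_int m"] by (simp add: mult_ac)
  finally show ?thesis by simp
qed

lemma torus_char_prod_Basis:
  "torus_char k x = (\<Prod>b\<in>Basis. exp (\<i> * of_real (x \<bullet> b) * of_real (kvec k \<bullet> b)))"
proof -
  have "\<i> * of_real (x \<bullet> kvec k) = (\<Sum>b\<in>Basis. \<i> * of_real (x \<bullet> b) * of_real (kvec k \<bullet> b))"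
    by (subst euclidean_inner) (simp add: sum_distrib_left mult.assoc)
  then show ?thesis
    by (simp add: torus_char_def exp_sum)
qed

lemma inner_const_vec_Basis: "b \<in> Basis \<Longrightarrow> (\<chi> i. c) \<bullet> b = (c::real)"
  by (auto simp: Basis_vec_def inner_axis)

lemma mem_torus_cell_iff: "x \<in> torus_cell \<longleftrightarrow> (\<forall>b\<in>Basis. x \<bullet> b \<in> {0..2*pi})"
  by (auto simp: torus_cell_def mem_box inner_const_vec_Basis)

lemma indicator_torus_cell_prod_Basis:
  fixes x :: "real^'d"
  shows "indicator torus_cell x = (\<Prod>b\<in>Basis. indicator {0..2*pi} (x \<bullet> b) :: real)"
  by (auto simp: indicator_def mem_torus_cell_iff prod_zero_iff)

lemma prod_Basis_if_kvec_inner: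
  fixes k :: "int^'d"
  shows "(\<Prod>b\<in>Basis. if kvec k \<bullet> b = 0 then c else 0) = (if k = 0 then c ^ CARD('d) else (0::complex))"
proof (cases "k = 0")
  case False
  then obtain i where "k $ i \<noteq> 0"
    by (auto simp: vec_eq_iff)
  then have "axis i 1 \<in> (Basis :: (real^'d) set)" "kvec k \<bullet> axis i 1 \<noteq> 0"
    by (auto simp: kvec_inner_axis Basis_vec_def)
  with False show ?thesis
    by (auto simp: prod_zero_iff)
qed simp

lemma has_integral_torus_char:
  fixes k :: "int^'d"
  shows "(torus_char k has_integral (if k = 0 then of_real ((2*pi)^CARD('d)) else 0)) torus_cell"
proof -
  define g where "g b t = indicator {0..2*pi} t *\<^sub>R exp (\<i> * of_real t * of_real (kvec k \<bullet> b))"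
    for b :: "real^'d" and t :: real
  have g_integrable: "integrable lborel (g b)" for b
    unfolding g_def by (intro borel_integrable_compact continuous_intros) auto
  have g_integral: "(\<integral>t. g b t \<partial>lborel) = (if kvec k \<bullet> b = 0 then of_real (2*pi) else 0)"
    if b: "b \<in> Basis" for b
  proof -
    obtain i where i: "b = axis i 1"
      using b by (auto simp: Basis_vec_def)
    have "g b = (\<lambda>t. if t \<in> {0..2*pi} then exp (\<i> * of_real t * of_int (k $ i)) else 0)"
      by (simp add: fun_eq_iff g_def i kvec_inner_axis indicator_scaleR_eq_if)
    then have "(g b has_integral (if k $ i = 0 then of_real (2*pi) else 0)) UNIV"
      using has_integral_exp_int_interval[of "k $ i"] by (simp only: has_integral_restrict_UNIV)
    then show ?thesis
      by (simp add: integral_unique flip: integral_lborel[OF g_integrable]) (simp add: i kvec_inner_axis)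
  qed
  have "indicator torus_cell x *\<^sub>R torus_char k x = (\<Prod>b\<in>Basis. g b (x \<bullet> b))" for x
    by (simp add: g_def scaleR_conv_of_real indicator_torus_cell_prod_Basis torus_char_prod_Basis
        prod.distrib of_real_prod mult.assoc)
  then have "((\<lambda>x. indicator torus_cell x *\<^sub>R torus_char k x) has_integral
      (\<Prod>b\<in>Basis. \<integral>t. g b t \<partial>lborel)) UNIV"
    using has_integral_integral_lborel[OF borel_integrable_compact[of torus_cell "torus_char k"]]
    by (simp add: integral_lborel_prod_Basis g_integrable torus_cell_def continuous_on_torus_char)
  also have "(\<Prod>b\<in>Basis. \<integral>t. g b t \<partial>lborel)
      = (if k = 0 then of_real ((2*pi)^CARD('d)) else 0)"
    by (simp only: prod.cong[OF refl g_integral] prod_Basis_if_kvec_inner of_real_power)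
  finally show ?thesis
    by (simp only: indicator_scaleR_eq_if has_integral_restrict_UNIV)
qed

lemma has_integral_torus_char_mult_cnj:
  fixes k j :: "int^'d"
  shows "((\<lambda>x. torus_char k x * cnj (torus_char j x)) has_integral
           (if k = j then of_real ((2*pi)^CARD('d)) else 0)) torus_cell"
  using has_integral_torus_char[of "k - j"] by (simp add: torus_char_mult_cnj)

lemma fourier_coeff_eq_integral:
  fixes f :: "real^'d \<Rightarrow> complex"
  shows "fourier_coeff f k = integral torus_cell (\<lambda>x. f x * cnj (torus_char k x)) / of_real ((2*pi)^CARD('d))"
  by (simp add: fourier_coeff_def torus_cell_def torus_char_def exp_cnj)

lemma has_integral_fourier_coeff:
  fixes f :: "real^'d \<Rightarrow> complex"
  assumes "continuous_on torus_cell f"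
  shows "((\<lambda>x. f x * cnj (torus_char k x)) has_integral of_real ((2*pi)^CARD('d)) * fourier_coeff f k) torus_cell"
proof -
  have "(\<lambda>x. f x * cnj (torus_char k x)) integrable_on torus_cell"
    unfolding torus_cell_def
    by (intro integrable_continuous continuous_intros assms[unfolded torus_cell_def])
  then show ?thesis
    by (simp add: fourier_coeff_eq_integral has_integral_integrable_integral)
qed

lemma has_integral_trig_poly_mult_cnj:
  fixes c :: "int^'d \<Rightarrow> complex"
  assumes "finite F"
  shows "((\<lambda>x. (\<Sum>k\<in>F. c k * torus_char k x) * cnj (torus_char m x)) has_integral
           (if m \<in> F then of_real ((2*pi)^CARD('d)) * c m else 0)) torus_cell"
proof -
  let ?N = "of_real ((2*pi)^CARD('d)) :: complex"
  have "((\<lambda>x. \<Sum>k\<in>F. c k * (torus_char k x * cnj (torus_char m x))) has_integral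
      (\<Sum>k\<in>F. c k * (if k = m then ?N else 0))) torus_cell"
    by (intro has_integral_sum assms has_integral_mult_right has_integral_torus_char_mult_cnj)
  moreover have "(\<lambda>x. \<Sum>k\<in>F. c k * (torus_char k x * cnj (torus_char m x)))
      = (\<lambda>x. (\<Sum>k\<in>F. c k * torus_char k x) * cnj (torus_char m x))"
    by (simp add: sum_distrib_right mult.assoc)
  moreover have "(\<Sum>k\<in>F. c k * (if k = m then ?N else 0)) = (if m \<in> F then ?N * c m else 0)"
    using assms by (simp add: if_distrib sum.delta mult.commute cong: if_cong)
  ultimately show ?thesis
    by (simp only:)
qed

lemma has_integral_mult_cnj_trig_poly:
  fixes g :: "real^'d \<Rightarrow> complex"
  assumes "finite F"
    and "\<And>k. k \<in> F \<Longrightarrow> ((\<lambda>x. g x * cnj (torus_char k x)) has_integral I k) torus_cell"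
  shows "((\<lambda>x. g x * cnj (\<Sum>k\<in>F. c k * torus_char k x)) has_integral
           (\<Sum>k\<in>F. cnj (c k) * I k)) torus_cell"
proof -
  have "((\<lambda>x. \<Sum>k\<in>F. cnj (c k) * (g x * cnj (torus_char k x))) has_integral (\<Sum>k\<in>F. cnj (c k) * I k))
      torus_cell"
    using assms by (intro has_integral_sum has_integral_mult_right) auto
  then show ?thesis
    by (simp add: cnj_sum sum_distrib_left mult_ac)
qed

section \<open>Fourier series with absolutely summable coefficients\<close>

lemma has_integral_uniform_limit_cbox:
  fixes f :: "'a \<Rightarrow> 'b::euclidean_space \<Rightarrow> 'c::banach"
  assumes "uniform_limit (cbox a b) f g F" "\<And>n. continuous_on (cbox a b) (f n)" "F \<noteq> bot"
    and "\<forall>\<^sub>F n in F. (f n has_integral I n) (cbox a b)" "(I \<longlongrightarrow> L) F"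
  shows "(g has_integral L) (cbox a b)"
proof -
  obtain I' J where I': "\<And>n. (f n has_integral I' n) (cbox a b)"
    and J: "(g has_integral J) (cbox a b)" and "(I' \<longlongrightarrow> J) F"
    using uniform_limit_integral_cbox[OF assms(1-3)] by blast
  moreover have "\<forall>\<^sub>F n in F. I' n = I n"
    using assms(4) by eventually_elim (use I' has_integral_unique in blast)
  ultimately have "(I \<longlongrightarrow> J) F"
    using tendsto_cong by blast
  with assms(3,5) J show ?thesis
    using tendsto_unique by blast
qed

lemma continuous_gen_if_abs_summable:
  fixes c :: "int^'d \<Rightarrow> complex"
  assumes summable: "(\<lambda>k. norm (c k)) summable_on UNIV"
  shows "continuous_gen c"
proof -
  define f where "f x = (\<Sum>\<^sub>\<infinity>k. c k * torus_char k x)" for x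
  have partial_sums_uniform:
    "uniform_limit UNIV (\<lambda>F x. (\<Sum>k\<in>F. c k * torus_char k x) * w x) (\<lambda>x. f x * w x)
       (finite_subsets_at_top UNIV)"
    if w: "\<And>x. norm (w x) \<le> 1" for w :: "real^'d \<Rightarrow> complex"
  proof -
    have "norm (c k * torus_char k x * w x) \<le> norm (c k)" for k x
      using w[of x] by (simp add: norm_mult mult_left_le)
    then have "uniform_limit UNIV (\<lambda>F x. \<Sum>k\<in>F. c k * torus_char k x * w x)
        (\<lambda>x. \<Sum>\<^sub>\<infinity>k. c k * torus_char k x * w x) (finite_subsets_at_top UNIV)"
      using summable by (intro Weierstrass_m_test_general)
    then show ?thesis
      by (simp add: f_def infsum_cmult_left' sum_distrib_right)
  qed
  have "continuous_on UNIV f"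
    using uniform_limit_theorem[OF _ partial_sums_uniform[of "\<lambda>_. 1"]]
    by (simp add: continuous_intros)
  moreover have "periodic_fun f"
    by (simp add: periodic_fun_def f_def torus_char_periodic)
  moreover have "fourier_coeff f m = c m" for m
  proof -
    let ?N = "of_real ((2*pi)^CARD('d)) :: complex"
    have "\<forall>\<^sub>F F in finite_subsets_at_top UNIV. (if m \<in> F then ?N * c m else 0) = ?N * c m"
      unfolding eventually_finite_subsets_at_top by (intro exI[of _ "{m}"]) auto
    then have "((\<lambda>F. if m \<in> F then ?N * c m else 0) \<longlongrightarrow> ?N * c m) (finite_subsets_at_top UNIV)"
      by (rule tendsto_eventually)
    moreover have "\<forall>\<^sub>F F in finite_subsets_at_top UNIV.
        ((\<lambda>x. (\<Sum>k\<in>F. c k * torus_char k x) * cnj (torus_char m x)) has_integral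
         (if m \<in> F then ?N * c m else 0)) torus_cell"
      by (intro eventually_finite_subsets_at_top_weakI has_integral_trig_poly_mult_cnj)
    moreover have "continuous_on S (\<lambda>x. (\<Sum>k\<in>F. c k * torus_char k x) * cnj (torus_char m x))" for F S
      by (intro continuous_intros)
    ultimately have "((\<lambda>x. f x * cnj (torus_char m x)) has_integral ?N * c m) torus_cell"
      using partial_sums_uniform[of "\<lambda>x. cnj (torus_char m x)"] unfolding torus_cell_def
      by (intro has_integral_uniform_limit_cbox) (auto intro: uniform_limit_on_subset)
    then show ?thesis
      by (simp add: fourier_coeff_eq_integral integral_unique)
  qed
  ultimately show ?thesis
    unfolding continuous_gen_def by blast
qed

lemma norm_diff_power2_complex:
  fixes a b :: complex
  shows "(norm (a - b))\<^sup>2 = (norm a)\<^sup>2 - 2 * Re (a * cnj b) + (norm b)\<^sup>2"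
  by (simp only: cmod_power2) (simp add: power2_eq_square algebra_simps)

lemma bessel_inequality:
  fixes f :: "real^'d \<Rightarrow> complex"
  assumes f: "continuous_on torus_cell f" and F: "finite F"
  shows "(2*pi)^CARD('d) * (\<Sum>k\<in>F. (norm (fourier_coeff f k))\<^sup>2)
           \<le> integral torus_cell (\<lambda>x. (norm (f x))\<^sup>2)"
proof -
  define N :: real where "N = (2*pi)^CARD('d)"
  define c where "c = fourier_coeff f"
  define S where "S x = (\<Sum>k\<in>F. c k * torus_char k x)" for x
  define T where "T = (\<Sum>k\<in>F. (norm (c k))\<^sup>2)"
  have Re_integral: "((\<lambda>x. Re (g x)) has_integral Re I) torus_cell"
    if "(g has_integral I) torus_cell" for g I
    using has_integral_linear[OF that bounded_linear_Re] by (simp add: o_def)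
  have cnj_square: "z * cnj z = of_real ((norm z)\<^sup>2)" "cnj z * z = of_real ((norm z)\<^sup>2)"
    for z :: complex
    using complex_norm_square[of z] by (simp_all add: mult.commute)
  have coeff_sum: "(\<Sum>k\<in>F. cnj (c k) * (of_real N * c k)) = of_real (N * T)"
    by (simp add: T_def cnj_square sum_distrib_left mult.left_commute)
  have "((\<lambda>x. f x * cnj (S x)) has_integral (\<Sum>k\<in>F. cnj (c k) * (of_real N * c k))) torus_cell"
    unfolding S_def N_def c_def using F f by (intro has_integral_mult_cnj_trig_poly has_integral_fourier_coeff)
  then have f_S: "((\<lambda>x. Re (f x * cnj (S x))) has_integral N * T) torus_cell"
    using coeff_sum by (auto dest: Re_integral)
  have "((\<lambda>x. S x * cnj (torus_char k x)) has_integral of_real N * c k) torus_cell" if "k \<in> F" for k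
    using has_integral_trig_poly_mult_cnj[OF F, of c k] that by (simp add: S_def N_def)
  then have "((\<lambda>x. S x * cnj (S x)) has_integral (\<Sum>k\<in>F. cnj (c k) * (of_real N * c k))) torus_cell"
    using F by (subst (2) S_def) (rule has_integral_mult_cnj_trig_poly)
  then have S_S: "((\<lambda>x. (norm (S x))\<^sup>2) has_integral N * T) torus_cell"
    using coeff_sum by (auto dest: Re_integral simp: cnj_square)
  have "(\<lambda>x. (norm (f x))\<^sup>2) integrable_on torus_cell"
    unfolding torus_cell_def
    by (intro integrable_continuous continuous_intros f[unfolded torus_cell_def])
  then have "((\<lambda>x. (norm (f x))\<^sup>2 - 2 * Re (f x * cnj (S x)) + (norm (S x))\<^sup>2) has_integral
      integral torus_cell (\<lambda>x. (norm (f x))\<^sup>2) - 2 * (N * T) + N * T) torus_cell"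
    by (intro has_integral_add has_integral_diff has_integral_mult_right f_S S_S integrable_integral)
  then have "((\<lambda>x. (norm (f x - S x))\<^sup>2) has_integral
      integral torus_cell (\<lambda>x. (norm (f x))\<^sup>2) - 2 * (N * T) + N * T) torus_cell"
    by (simp only: norm_diff_power2_complex)
  then have "0 \<le> integral torus_cell (\<lambda>x. (norm (f x))\<^sup>2) - 2 * (N * T) + N * T"
    by (rule has_integral_nonneg) simp
  then show ?thesis
    by (simp add: N_def T_def c_def mult_ac)
qed

lemma square_summable_if_continuous_gen:
  fixes c :: "int^'d \<Rightarrow> complex"
  assumes "continuous_gen c"
  shows "(\<lambda>k. (norm (c k))\<^sup>2) summable_on UNIV"
proof -
  obtain f where f: "continuous_on UNIV f" and coeff: "\<And>k. fourier_coeff f k = c k"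
    using assms unfolding continuous_gen_def by blast
  have "(\<Sum>k\<in>F. (norm (c k))\<^sup>2) \<le> integral torus_cell (\<lambda>x. (norm (f x))\<^sup>2) / (2*pi)^CARD('d)"
    if "finite F" for F
    using bessel_inequality[OF continuous_on_subset[OF f] that]
    by (simp add: coeff pos_le_divide_eq mult.commute)
  then show ?thesis
    by (intro nonneg_bdd_above_summable_on bdd_aboveI) auto
qed

section \<open>Lattice sums\<close>

lemma bij_betw_vec_nth_PiE: "bij_betw vec_nth {x::'a^'n. \<forall>i. x $ i \<in> A i} (PiE UNIV A)"
  by (intro bij_betwI[of _ _ _ vec_lambda]) (auto simp: vec_eq_iff PiE_UNIV_domain)

lemma finite_int_vec_box: "finite {k::int^'d. \<forall>i. k $ i \<in> {a..b}}"
  using bij_betw_finite[OF bij_betw_vec_nth_PiE, of "\<lambda>_. {a..b}"] by (simp add: finite_PiE)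

definition lattice_cube :: "int \<Rightarrow> (int^'d) set" where
  "lattice_cube n = {k. \<forall>i. k $ i \<in> {1..n}}"

lemma finite_lattice_cube: "finite (lattice_cube n)"
  unfolding lattice_cube_def by (rule finite_int_vec_box)

lemma card_lattice_cube: "card (lattice_cube n :: (int^'d) set) = nat n ^ CARD('d)"
  unfolding lattice_cube_def using bij_betw_same_card[OF bij_betw_vec_nth_PiE, of "\<lambda>_. {1..n}"]
  by (simp add: card_PiE)

lemma abs_le_norm_kvec: "\<bar>real_of_int (k $ i)\<bar> \<le> norm (kvec k)"
  using component_le_norm_cart[of "kvec k" i] by (simp add: kvec_def)

lemma one_le_norm_kvec: "k \<noteq> 0 \<Longrightarrow> 1 \<le> norm (kvec k)"
proof -
  assume "k \<noteq> 0"
  then obtain i where "k $ i \<noteq> 0"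
    by (auto simp: vec_eq_iff)
  then show ?thesis
    using abs_le_norm_kvec[of k i] by linarith
qed

lemma finite_norm_kvec_less: "finite {k::int^'d. norm (kvec k) < R}"
proof (rule finite_subset[OF _ finite_int_vec_box[of "-\<lceil>R\<rceil>" "\<lceil>R\<rceil>"]])
  show "{k::int^'d. norm (kvec k) < R} \<subseteq> {k. \<forall>i. k $ i \<in> {-\<lceil>R\<rceil>..\<lceil>R\<rceil>}}"
  proof safe
    fix k :: "int^'d" and i
    assume "norm (kvec k) < R"
    then have "\<bar>real_of_int (k $ i)\<bar> < R"
      using abs_le_norm_kvec[of k i] by linarith
    then have "k $ i \<le> \<lceil>R\<rceil>" "- k $ i \<le> \<lceil>R\<rceil>"
      by (simp_all add: abs_less_iff le_ceiling_iff)
    then show "k $ i \<in> {-\<lceil>R\<rceil>..\<lceil>R\<rceil>}"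
      by simp
  qed
qed

lemma summable_on_iff_norm_kvec_ge:
  fixes f :: "int^'d \<Rightarrow> 'b::banach"
  shows "f summable_on A \<longleftrightarrow> f summable_on (A \<inter> {k. R \<le> norm (kvec k)})"
proof
  assume "f summable_on A \<inter> {k. R \<le> norm (kvec k)}"
  moreover have "f summable_on A \<inter> {k. norm (kvec k) < R}"
    by (intro summable_on_finite finite_subset[OF _ finite_norm_kvec_less]) auto
  ultimately have "f summable_on (A \<inter> {k. R \<le> norm (kvec k)}) \<union> (A \<inter> {k. norm (kvec k) < R})"
    by (rule summable_on_Un_disjoint) auto
  moreover have "(A \<inter> {k. R \<le> norm (kvec k)}) \<union> (A \<inter> {k. norm (kvec k) < R}) = A"
    by auto
  ultimately show "f summable_on A"
    by simp
qed (rule summable_on_subset_banach, auto)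

lemma summable_on_int_one_plus_abs_powr:
  assumes "p > 1"
  shows "(\<lambda>n::int. (1 + \<bar>real_of_int n\<bar>) powr -p) summable_on UNIV"
proof -
  let ?h = "\<lambda>n::int. (1 + \<bar>real_of_int n\<bar>) powr -p"
  have "summable (\<lambda>n. real n powr -p)"
    using assms by (simp add: summable_real_powr_iff)
  then have "summable (\<lambda>n. real (Suc n) powr -p)"
    by (subst summable_Suc_iff)
  then have nat: "(\<lambda>n::nat. (1 + real n) powr -p) summable_on UNIV"
    by (subst summable_on_UNIV_nonneg_real_iff) (auto simp: add.commute)
  have "?h summable_on range int" "?h summable_on range (\<lambda>n. - int n)"
    by (subst summable_on_reindex; simp add: o_def nat inj_on_def)+
  then have "?h summable_on (range int \<union> range (\<lambda>n. - int n))"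
    by (rule summable_on_union)
  moreover have "range int \<union> range (\<lambda>n. - int n) = UNIV"
    by (auto intro: int_cases2)
  ultimately show ?thesis
    by simp
qed

lemma summable_on_prod_one_plus_abs_powr:
  assumes "p > 1"
  shows "(\<lambda>k::int^'d. \<Prod>i\<in>UNIV. (1 + \<bar>real_of_int (k $ i)\<bar>) powr -p) summable_on UNIV"
proof -
  let ?h = "\<lambda>(i::'d) (n::int). (1 + \<bar>real_of_int n\<bar>) powr -p"
  have "Infinite_Set_Sum.abs_summable_on (?h i) UNIV" for i
    using summable_on_int_one_plus_abs_powr[OF assms] by (simp flip: abs_summable_equivalent)
  then have "Infinite_Set_Sum.abs_summable_on (\<lambda>g. \<Prod>i\<in>UNIV. ?h i (g i)) (PiE UNIV (\<lambda>_. UNIV))"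
    by (intro abs_summable_on_prod_PiE) auto
  then have "(\<lambda>g. \<Prod>i\<in>UNIV. ?h i (g i)) summable_on PiE UNIV (\<lambda>_. UNIV)"
    by (simp add: prod_nonneg flip: abs_summable_equivalent)
  then show ?thesis
    using summable_on_reindex_bij_betw[OF bij_betw_vec_nth_PiE[of "\<lambda>_. UNIV"],
        of "\<lambda>g. \<Prod>i\<in>UNIV. ?h i (g i)"]
    by simp
qed

lemma norm_kvec_powr_le_prod:
  fixes k :: "int^'d"
  assumes "s \<ge> 0"
  shows "norm (kvec k) powr -s
           \<le> 2 powr s * (\<Prod>i\<in>UNIV. (1 + \<bar>real_of_int (k $ i)\<bar>) powr -(s / CARD('d)))"
proof (cases "k = 0")
  case False
  define r where "r = norm (kvec k)"
  have r: "1 \<le> r"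
    using one_le_norm_kvec[OF False] by (simp add: r_def)
  have "1 + \<bar>real_of_int (k $ i)\<bar> \<le> 2 * r" for i
    using abs_le_norm_kvec[of k i] r unfolding r_def by linarith
  then have "(\<Prod>i\<in>UNIV. 1 + \<bar>real_of_int (k $ i)\<bar>) \<le> (\<Prod>i\<in>(UNIV::'d set). 2 * r)"
    by (intro prod_mono) auto
  then have "((2 * r) ^ CARD('d)) powr -(s / CARD('d))
      \<le> (\<Prod>i\<in>UNIV. 1 + \<bar>real_of_int (k $ i)\<bar>) powr -(s / CARD('d))"
    using assms by (intro powr_mono2') (auto intro: prod_pos)
  also have "((2 * r) ^ CARD('d)) powr -(s / CARD('d)) = 2 powr -s * r powr -s"
    using r by (simp add: powr_realpow[symmetric] powr_powr powr_mult)
  finally have le: "2 powr -s * r powr -s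
      \<le> (\<Prod>i\<in>UNIV. 1 + \<bar>real_of_int (k $ i)\<bar>) powr -(s / CARD('d))" .
  have "norm (kvec k) powr -s = 2 powr s * (2 powr -s * r powr -s)"
    by (simp add: r_def mult.assoc[symmetric] powr_add[symmetric])
  also have "\<dots> \<le> 2 powr s * (\<Prod>i\<in>UNIV. 1 + \<bar>real_of_int (k $ i)\<bar>) powr -(s / CARD('d))"
    using le by (rule mult_left_mono) simp
  finally show ?thesis
    by (simp only: prod_powr_distrib)
qed (simp add: prod_nonneg)

lemma summable_on_norm_kvec_powr:
  fixes s :: real
  assumes "s > CARD('d)"
  shows "(\<lambda>k::int^'d. norm (kvec k) powr -s) summable_on UNIV"
proof (rule summable_on_comparison_test)
  have "0 \<le> s"
    using assms by (smt (verit) of_nat_0_le_iff)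
  then show "norm (kvec k) powr -s
      \<le> 2 powr s * (\<Prod>i\<in>UNIV. (1 + \<bar>real_of_int (k $ i)\<bar>) powr -(s / CARD('d)))" for k :: "int^'d"
    by (rule norm_kvec_powr_le_prod)
  show "(\<lambda>k::int^'d. 2 powr s * (\<Prod>i\<in>UNIV. (1 + \<bar>real_of_int (k $ i)\<bar>) powr -(s / CARD('d))))
      summable_on UNIV"
    using assms summable_on_prod_one_plus_abs_powr[of "s / CARD('d)"]
    by (intro summable_on_cmult_right) simp
qed simp

lemma norm_kvec_le_card_mult:
  fixes k :: "int^'d" and m :: int
  assumes "\<And>i. \<bar>k $ i\<bar> \<le> m"
  shows "norm (kvec k) \<le> real CARD('d) * real_of_int m"
proof -
  have "norm (kvec k) \<le> (\<Sum>i\<in>UNIV. \<bar>kvec k $ i\<bar>)"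
    by (rule norm_le_l1_cart)
  also have "\<dots> \<le> (\<Sum>i\<in>(UNIV::'d set). real_of_int m)"
    using assms by (intro sum_mono) (simp add: kvec_def flip: of_int_abs)
  finally show ?thesis
    by simp
qed

lemma sum_lattice_cube_double_ge:
  fixes n :: int
  defines "g \<equiv> \<lambda>k::int^'d. norm (kvec k) powr -real CARD('d)"
  assumes n: "1 \<le> n"
  shows "sum g (lattice_cube n) + (2^CARD('d) - 1) / (2 * CARD('d)) ^ CARD('d) \<le> sum g (lattice_cube (2*n))"
proof -
  define d where "d = CARD('d)"
  define c :: real where "c = (2 * d * n) ^ d"
  have sub: "lattice_cube n \<subseteq> lattice_cube (2*n)"
    using n by (auto simp: lattice_cube_def) (smt (verit))
  have lower: "1 / c \<le> g k" if k: "k \<in> lattice_cube (2*n)" for k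
  proof -
    have "k \<noteq> 0"
      using k by (auto simp: lattice_cube_def vec_eq_iff) (metis not_one_le_zero)
    then have "0 < norm (kvec k)"
      by simp
    moreover have "norm (kvec k) \<le> real d * real_of_int (2 * n)"
      unfolding d_def using k by (intro norm_kvec_le_card_mult)
        (auto simp: lattice_cube_def abs_le_iff, smt (verit))
    ultimately have "(real d * (2 * n)) powr -real d \<le> g k"
      unfolding g_def d_def by (intro powr_mono2') auto
    moreover have "(real d * (2 * n)) powr -real d = 1 / c"
      using n by (simp add: c_def powr_minus powr_realpow divide_inverse mult_ac d_def)
    ultimately show ?thesis
      by simp
  qed
  have "card (lattice_cube (2*n) - lattice_cube n :: (int^'d) set) = nat (2*n) ^ d - nat n ^ d"
    using card_Diff_subset[OF finite_lattice_cube sub] by (simp add: card_lattice_cube d_def)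
  then have card: "real (card (lattice_cube (2*n) - lattice_cube n :: (int^'d) set)) = n^d * (2^d - 1)"
    using n by (simp add: of_nat_diff power_mono power_mult_distrib algebra_simps)
  have "(2^d - 1) / (2 * d) ^ d = real (card (lattice_cube (2*n) - lattice_cube n :: (int^'d) set)) * (1 / c)"
    using n unfolding card c_def by (simp add: power_mult_distrib)
  also have "\<dots> \<le> sum g (lattice_cube (2*n) - lattice_cube n)"
    using lower by (intro sum_bounded_below) auto
  also have "\<dots> = sum g (lattice_cube (2*n)) - sum g (lattice_cube n)"
    by (rule sum_diff[OF finite_lattice_cube sub])
  finally show ?thesis
    by (simp add: d_def)
qed

lemma not_summable_on_norm_kvec_powr_card:
  "\<not> (\<lambda>k::int^'d. norm (kvec k) powr -real CARD('d)) summable_on UNIV"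
proof
  define g where "g = (\<lambda>k::int^'d. norm (kvec k) powr -real CARD('d))"
  define \<delta> :: real where "\<delta> = (2^CARD('d) - 1) / (2 * CARD('d)) ^ CARD('d)"
  assume "(\<lambda>k::int^'d. norm (kvec k) powr -real CARD('d)) summable_on UNIV"
  then have summable: "g summable_on UNIV"
    by (simp add: g_def)
  have "\<delta> > 0"
    unfolding \<delta>_def by (intro divide_pos_pos) (auto simp: one_less_power)
  then obtain j :: nat where j: "infsum g UNIV < real j * \<delta>"
    by (metis reals_Archimedean3 mult.commute)
  have "real j * \<delta> \<le> sum g (lattice_cube (2^j))"
  proof (induction j)
    case (Suc j)
    have "sum g (lattice_cube (2^j)) + \<delta> \<le> sum g (lattice_cube (2 * 2^j))"
      using sum_lattice_cube_double_ge[of "2^j", where 'd='d] unfolding g_def \<delta>_def by simp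
    with Suc.IH show ?case
      by (simp add: algebra_simps)
  qed (simp add: g_def sum_nonneg)
  also have "\<dots> \<le> infsum g UNIV"
    using summable by (intro finite_sum_le_infsum) (auto simp: finite_lattice_cube g_def)
  finally show False
    using j by simp
qed

section \<open>Sampling admissibility\<close>

lemma norm_pinv_seq_shifted_comb:
  "norm (cnj (pinv_seq Lhat k) * shifted_comb x0 k) = (if Lhat k = 0 then 0 else 1 / norm (Lhat k))"
  by (simp add: pinv_seq_def shifted_comb_def norm_mult norm_divide)

lemma sampling_admissible_if_summable_inverse:
  fixes Lhat :: "int^'d \<Rightarrow> complex"
  assumes "(\<lambda>k. 1 / norm (Lhat k)) summable_on {k. Lhat k \<noteq> 0}"
  shows "sampling_admissible Lhat"
  unfolding sampling_admissible_def
proof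
  fix x0 :: "real^'d"
  have "(\<lambda>k. norm (cnj (pinv_seq Lhat k) * shifted_comb x0 k)) summable_on UNIV"
    using assms by (subst summable_on_cong_neutral[where T = "{k. Lhat k \<noteq> 0}"])
      (auto simp: norm_pinv_seq_shifted_comb)
  then show "continuous_gen (\<lambda>k. cnj (pinv_seq Lhat k) * shifted_comb x0 k)"
    by (rule continuous_gen_if_abs_summable)
qed

lemma summable_inverse_square_if_sampling_admissible:
  fixes Lhat :: "int^'d \<Rightarrow> complex"
  assumes "sampling_admissible Lhat"
  shows "(\<lambda>k. 1 / norm (Lhat k) ^ 2) summable_on {k. Lhat k \<noteq> 0}"
proof -
  have "continuous_gen (\<lambda>k. cnj (pinv_seq Lhat k) * shifted_comb 0 k)"
    using assms unfolding sampling_admissible_def by blast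
  then have "(\<lambda>k. (norm (cnj (pinv_seq Lhat k) * shifted_comb 0 k))\<^sup>2) summable_on {k. Lhat k \<noteq> 0}"
    by (rule summable_on_subset_banach[OF square_summable_if_continuous_gen]) simp
  then show ?thesis
    by (rule summable_on_cong[THEN iffD1, rotated]) (simp add: norm_pinv_seq_shifted_comb power_one_over)
qed

lemma spectral_growth_tail_bounds:
  assumes "spectral_growth Lhat \<gamma>"
  obtains A R B where "0 < A" "1 \<le> R"
    and "\<And>k. R \<le> norm (kvec k) \<Longrightarrow>
           A * norm (kvec k) powr \<gamma> \<le> norm (Lhat k) \<and> norm (Lhat k) \<le> B * norm (kvec k) powr \<gamma>"
proof -
  obtain A B k0 where "0 < A"
    and "\<And>k. k0 \<le> norm (kvec k) \<Longrightarrow>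
           A * norm (kvec k) powr \<gamma> \<le> norm (Lhat k) \<and> norm (Lhat k) \<le> B * norm (kvec k) powr \<gamma>"
    using assms unfolding spectral_growth_def by blast
  then show ?thesis
    by (intro that[of A "max k0 1" B]) auto
qed

lemma summable_inverse_if_spectral_growth_gt:
  fixes Lhat :: "int^'d \<Rightarrow> complex"
  assumes "spectral_growth Lhat \<gamma>" and "\<gamma> > CARD('d)"
  shows "(\<lambda>k. 1 / norm (Lhat k)) summable_on {k. Lhat k \<noteq> 0}"
proof -
  obtain A R B where A: "0 < A" and R: "1 \<le> R"
    and bounds: "\<And>k. R \<le> norm (kvec k) \<Longrightarrow>
           A * norm (kvec k) powr \<gamma> \<le> norm (Lhat k) \<and> norm (Lhat k) \<le> B * norm (kvec k) powr \<gamma>"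
    using spectral_growth_tail_bounds[OF assms(1)] by blast
  let ?T = "{k. Lhat k \<noteq> 0} \<inter> {k. R \<le> norm (kvec k)}"
  have "(\<lambda>k. 1 / norm (Lhat k)) summable_on ?T"
  proof (rule summable_on_comparison_test)
    have "(\<lambda>k. norm (kvec k) powr -\<gamma>) summable_on ?T"
      by (rule summable_on_subset_banach[OF summable_on_norm_kvec_powr[OF assms(2)]]) simp
    then show "(\<lambda>k. norm (kvec k) powr -\<gamma> * (1 / A)) summable_on ?T"
      by (rule summable_on_cmult_left)
    show "1 / norm (Lhat k) \<le> norm (kvec k) powr -\<gamma> * (1 / A)" if "k \<in> ?T" for k
    proof -
      have "norm (kvec k) \<noteq> 0"
        using that R by auto
      then have "0 < A * norm (kvec k) powr \<gamma>"
        using A by simp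
      then have "1 / norm (Lhat k) \<le> 1 / (A * norm (kvec k) powr \<gamma>)"
        using bounds[of k] that by (intro divide_left_mono) auto
      then show ?thesis
        by (simp add: powr_minus divide_inverse mult.commute)
    qed
  qed simp
  then show ?thesis
    by (simp flip: summable_on_iff_norm_kvec_ge)
qed

lemma not_sampling_admissible_if_spectral_growth_le:
  fixes Lhat :: "int^'d \<Rightarrow> complex"
  assumes "spectral_growth Lhat \<gamma>" and "\<gamma> \<le> CARD('d) / 2"
  shows "\<not> sampling_admissible Lhat"
proof
  assume "sampling_admissible Lhat"
  then have summable: "(\<lambda>k. 1 / norm (Lhat k) ^ 2) summable_on {k. Lhat k \<noteq> 0}"
    by (rule summable_inverse_square_if_sampling_admissible)
  obtain A R B where A: "0 < A" and R: "1 \<le> R"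
    and bounds: "\<And>k. R \<le> norm (kvec k) \<Longrightarrow>
           A * norm (kvec k) powr \<gamma> \<le> norm (Lhat k) \<and> norm (Lhat k) \<le> B * norm (kvec k) powr \<gamma>"
    using spectral_growth_tail_bounds[OF assms(1)] by blast
  let ?T = "{k::int^'d. R \<le> norm (kvec k)}"
  have nonzero: "0 < norm (Lhat k)" if "k \<in> ?T" for k
  proof -
    have "norm (kvec k) \<noteq> 0"
      using that R by auto
    then have "0 < A * norm (kvec k) powr \<gamma>"
      using A by simp
    moreover have "A * norm (kvec k) powr \<gamma> \<le> norm (Lhat k)"
      using bounds[of k] that by simp
    ultimately show ?thesis
      by linarith
  qed
  have "(\<lambda>k. 1 / norm (Lhat k) ^ 2) summable_on ?T"
    using nonzero by (intro summable_on_subset_banach[OF summable]) auto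
  then have majorant: "(\<lambda>k. B\<^sup>2 * (1 / norm (Lhat k) ^ 2)) summable_on ?T"
    by (rule summable_on_cmult_right)
  have bound: "norm (kvec k) powr -real CARD('d) \<le> B\<^sup>2 * (1 / norm (Lhat k) ^ 2)" if k: "k \<in> ?T" for k
  proof -
    define r where "r = norm (kvec k)"
    have r: "1 \<le> r"
      using k R by (simp add: r_def)
    have "norm (Lhat k) ^ 2 \<le> (B * r powr \<gamma>)\<^sup>2"
      using bounds[of k] k nonzero[OF k] by (intro power_mono) (simp_all add: r_def)
    also have "\<dots> = B\<^sup>2 * r powr (2 * \<gamma>)"
      using r by (simp add: power_mult_distrib powr_power)
    also have "\<dots> \<le> B\<^sup>2 * r powr CARD('d)"
      using assms(2) r by (intro mult_left_mono powr_mono) auto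
    finally have "norm (Lhat k) ^ 2 \<le> B\<^sup>2 * r powr CARD('d)" .
    moreover have "0 < r powr CARD('d)"
      using r by simp
    ultimately show ?thesis
      using nonzero[OF k] by (simp add: r_def powr_minus field_simps)
  qed
  have "(\<lambda>k::int^'d. norm (kvec k) powr -real CARD('d)) summable_on ?T"
    by (rule summable_on_comparison_test[OF majorant bound]) auto
  then have "(\<lambda>k::int^'d. norm (kvec k) powr -real CARD('d)) summable_on UNIV"
    by (simp add: summable_on_iff_norm_kvec_ge[of _ UNIV R])
  with not_summable_on_norm_kvec_powr_card show False
    by blast
qed

theorem mainTheorem9:
  fixes Lhat :: "int ^ 'd \<Rightarrow> complex"
  assumes "spline_admissible Lhat"
  shows "((\<lambda>k. 1 / norm (Lhat k)) summable_on {k. Lhat k \<noteq> 0} \<longrightarrow> sampling_admissible Lhat)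
       \<and> (\<not> (\<lambda>k. 1 / norm (Lhat k) ^ 2) summable_on {k. Lhat k \<noteq> 0} \<longrightarrow> \<not> sampling_admissible Lhat)
       \<and> (\<forall>\<gamma>. spectral_growth Lhat \<gamma> \<and> \<gamma> > real CARD('d) \<longrightarrow> sampling_admissible Lhat)
       \<and> (\<forall>\<gamma>. spectral_growth Lhat \<gamma> \<and> \<gamma> \<le> real CARD('d) / 2 \<longrightarrow> \<not> sampling_admissible Lhat)"
  using sampling_admissible_if_summable_inverse summable_inverse_square_if_sampling_admissible
    summable_inverse_if_spectral_growth_gt not_sampling_admissible_if_spectral_growth_le
  by blast

end
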